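(* For every integer $a\geq 3$ and every integer $m\geq 2a^2-a+2$, the 2-color Rado number of the equation $L(m,a)$ equals $C(m,a)=\left\lceil \frac{m-1}{a}\left\lceil \frac{m-1}{a}\right\rceil\right\rceil$.
   Context: For integers $m\geq 3$, $a\geq 1$, $L(m,a)$ denotes the equation $x_1+x_2+\cdots+x_{m-1}=a x_m$. For a positive integer $n$, $[n]=\{1,\dots,n\}$. A solution of $L(m,a)$ in $[n]$ is an $m$-tuple $(x_1,\dots,x_m)\in[n]^m$ (entries not necessarily distinct) satisfying the equation; given a 2-coloring of $[n]$, it is monochromatic if all $x_i$ have the same color. The 2-color Rado number of $L(m,a)$ is the least positive integer $n$ such that every 2-coloring of $[n]$ admits a monochromatic solution of $L(m,a)$ in $[n]$. $C(m,a)$ denotes $\left\lceil \frac{m-1}{a}\left\lceil \frac{m-1}{a}\right\rceil\right\rceil$. *)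

theory Defs
  imports Complex_Main
begin

text \<open>A solution of L(m,a): x_1 + ... + x_{m-1} = a x_m, with entries in [n] = {1..n}.
  Tuples are represented as functions x on indices 1..m.\<close>
definition is_solution_in :: "nat \<Rightarrow> nat \<Rightarrow> nat \<Rightarrow> (nat \<Rightarrow> nat) \<Rightarrow> bool" where
  "is_solution_in m a n x \<longleftrightarrow>
     (\<forall>i\<in>{1..m}. x i \<in> {1..n}) \<and> (\<Sum>i=1..m-1. x i) = a * x m"

definition rado_property :: "nat \<Rightarrow> nat \<Rightarrow> nat \<Rightarrow> bool" where
  "rado_property m a n \<longleftrightarrow>
     (\<forall>c :: nat \<Rightarrow> bool. \<exists>x. is_solution_in m a n x \<and>
        (\<forall>i\<in>{1..m}. \<forall>j\<in>{1..m}. c (x i) = c (x j)))"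

definition rado_number :: "nat \<Rightarrow> nat \<Rightarrow> nat" where
  "rado_number m a = (LEAST n. n \<ge> 1 \<and> rado_property m a n)"

definition C :: "nat \<Rightarrow> nat \<Rightarrow> int" where
  "C m a = \<lceil>(real (m - 1) / real a) * real_of_int \<lceil>real (m - 1) / real a\<rceil>\<rceil>"

end

theory Submission
  imports Defs
begin

(* The 2-colour Rado number of L(m,a): x_1 + ... + x_{m-1} = a x_m, for a \<ge> 3 and
   m \<ge> 2a^2 - a + 2.  Write k = m - 1, t = \<lceil>k/a\<rceil> and N = \<lceil>k t/a\<rceil>; then C(m,a) = N.

   Lower bound (valid for all a \<ge> 1, m \<ge> 2): colouring [1,t-1] and [t,N-1] differently
   avoids monochromatic solutions in [1,N-1], because x_m < t forces a x_m < k, while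
   t \<le> x_m < N forces a x_m < k t, and these are lower bounds for the left-hand side.

   Upper bound: a monochromatic solution with right-hand side y is a representation of a y
   as a sum of k numbers of the colour of y (is_sum_of).  Locale mono_sum_free collects
   colourings of [1,n] without such representations; locale critical_colouring adds
   n = N and the size condition on k, and we show it is contradictory:
   - c 2 = c 1, by three explicit sums (colours_of_1_and_2_agree);
   - if [1,b-1] has the colour of 1 (b \<ge> 3), then every y with k \<le> a y and
     y \<le> (k+1-a)(b-1) has the other colour (initial_block_forbids);
   - if [1,t-1] is monochromatic, this forces colours of t, t+1 and then N that admit a
     monochromatic sum; otherwise the least b with c b \<noteq> c 1 lies in [3,t-1] and forces
     two suitable numbers z, x to have the colour of b, giving a monochromatic sum again. *)

definition is_sum_of :: "(nat \<Rightarrow> bool) \<Rightarrow> nat \<Rightarrow> nat \<Rightarrow> bool" where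
  "is_sum_of P N s \<longleftrightarrow> (\<exists>xs. length xs = N \<and> (\<forall>v\<in>set xs. P v) \<and> sum_list xs = s)"

lemma is_sum_of_replicate: "P v \<Longrightarrow> is_sum_of P N (N * v)"
  unfolding is_sum_of_def by (rule exI[of _ "replicate N v"]) (simp add: sum_list_replicate)

lemma is_sum_of_add: "is_sum_of P N1 s1 \<Longrightarrow> is_sum_of P N2 s2 \<Longrightarrow> is_sum_of P (N1 + N2) (s1 + s2)"
  unfolding is_sum_of_def by (metis Un_iff length_append set_append sum_list_append)

lemma is_sum_of_interval:
  assumes "\<And>v. L \<le> v \<Longrightarrow> v \<le> M \<Longrightarrow> P v" "L \<le> M" "N * L \<le> s" "s \<le> N * M"
  shows "is_sum_of P N s"
  using assms(3,4)
proof (induction N arbitrary: s)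
  case 0
  then show ?case unfolding is_sum_of_def by simp
next
  case (Suc N)
  define v where "v = min M (s - N * L)"
  have v: "L \<le> v" "v \<le> M" "v \<le> s" using Suc.prems assms(2) by (auto simp: v_def)
  have "N * L \<le> N * M" using assms(2) by simp
  then have "is_sum_of P N (s - v)" using Suc.prems by (intro Suc.IH) (auto simp: v_def min_def)
  moreover have "is_sum_of P 1 v" using is_sum_of_replicate[of P v 1] assms(1) v by simp
  ultimately have "is_sum_of P (N + 1) (s - v + v)" by (rule is_sum_of_add)
  then show ?case using v by simp
qed

lemma solution_from_sum:
  assumes "2 \<le> m" "is_sum_of (\<lambda>v. v \<in> {1..n} \<and> c v = c y) (m - 1) (a * y)" "y \<in> {1..n}"
  shows "\<exists>x. is_solution_in m a n x \<and> (\<forall>i\<in>{1..m}. \<forall>j\<in>{1..m}. c (x i) = c (x j))"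
proof -
  obtain xs where xs: "length xs = m - 1" "\<forall>v\<in>set xs. v \<in> {1..n} \<and> c v = c y"
    "sum_list xs = a * y"
    using assms(2) unfolding is_sum_of_def by blast
  define x where "x i = (if i = m then y else xs ! (i - 1))" for i
  have entries: "x i \<in> {1..n} \<and> c (x i) = c y" if "i \<in> {1..m}" for i
  proof (cases "i = m")
    case False
    then have "xs ! (i - 1) \<in> set xs" using that xs(1) by auto
    then show ?thesis using xs(2) False by (simp add: x_def)
  qed (use assms in \<open>simp add: x_def\<close>)
  have "(\<Sum>i=1..m-1. x i) = (\<Sum>i=1..m-1. xs ! (i - 1))"
    by (rule sum.cong) (auto simp: x_def)
  also have "\<dots> = (\<Sum>i<m-1. xs ! i)"
  proof -
    have "(\<Sum>i=1..N. f (i - 1)) = (\<Sum>i<N. f i)" for N and f :: "nat \<Rightarrow> nat"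
      by (induction N) (simp_all add: lessThan_Suc)
    then show ?thesis .
  qed
  also have "\<dots> = a * x m" using xs(1,3) by (simp add: sum_list_sum_nth atLeast0LessThan x_def)
  finally show ?thesis using entries unfolding is_solution_in_def by (intro exI[of _ x]) auto
qed

definition ceil_div :: "nat \<Rightarrow> nat \<Rightarrow> nat" where
  "ceil_div u a = (u + a - 1) div a"

lemma ceil_div_bounds:
  assumes "0 < a"
  shows "u \<le> a * ceil_div u a" "a * ceil_div u a < u + a"
proof -
  have "u + a - 1 = a * ceil_div u a + (u + a - 1) mod a" unfolding ceil_div_def by simp
  moreover have "(u + a - 1) mod a < a" using assms by simp
  ultimately show "u \<le> a * ceil_div u a" "a * ceil_div u a < u + a" by linarith+
qed

lemma ceil_div_pos: "0 < a \<Longrightarrow> 0 < u \<Longrightarrow> 0 < ceil_div u a"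
  using ceil_div_bounds(1)[of a u] by (cases "ceil_div u a") auto

lemma ceiling_divide_nat:
  assumes "0 < a"
  shows "\<lceil>real u / real a\<rceil> = int (ceil_div u a)"
proof (rule ceiling_unique)
  have "real u \<le> real a * real (ceil_div u a)"
    using ceil_div_bounds(1)[OF assms] by (metis of_nat_le_iff of_nat_mult)
  then show "real u / real a \<le> real_of_int (int (ceil_div u a))"
    using assms by (simp add: divide_le_eq mult.commute)
  have "real a * real (ceil_div u a) < real u + real a"
    using ceil_div_bounds(2)[OF assms] by (metis of_nat_add of_nat_less_iff of_nat_mult)
  then show "real_of_int (int (ceil_div u a)) - 1 < real u / real a"
    using assms by (simp add: less_divide_eq algebra_simps)
qed

lemma C_eq_ceil_div:
  assumes "0 < a"
  shows "C m a = int (ceil_div ((m - 1) * ceil_div (m - 1) a) a)"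
proof -
  have "real (m - 1) / real a * real_of_int \<lceil>real (m - 1) / real a\<rceil>
      = real ((m - 1) * ceil_div (m - 1) a) / real a"
    by (simp add: ceiling_divide_nat[OF assms])
  then show ?thesis unfolding C_def by (simp only: ceiling_divide_nat[OF assms])
qed

section \<open>The lower bound\<close>

text \<open>For n < \<lceil>k t/a\<rceil> the colouring by "v < t" has no monochromatic solution in [1,n].\<close>
lemma rado_lower_bound:
  assumes "0 < a" "2 \<le> m" "n < ceil_div ((m - 1) * ceil_div (m - 1) a) a"
  shows "\<not> rado_property m a n"
proof
  define k where "k = m - 1"
  define t where "t = ceil_div k a"
  define N where "N = ceil_div (k * t) a"
  assume "rado_property m a n"
  then obtain x where sol: "is_solution_in m a n x"
    and mono: "\<forall>i\<in>{1..m}. \<forall>j\<in>{1..m}. (x i < t) = (x j < t)"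
    unfolding rado_property_def by (elim allE[of _ "\<lambda>v. v < t"]) blast
  have range: "x i \<in> {1..n}" if "i \<in> {1..m}" for i using sol that unfolding is_solution_in_def by blast
  have eq: "(\<Sum>i=1..k. x i) = a * x m" using sol unfolding is_solution_in_def k_def by blast
  have m_in: "m \<in> {1..m}" using assms(2) by simp
  have no_sol: False if "\<And>i. i \<in> {1..k} \<Longrightarrow> L \<le> x i" "x m < B" "a * B < k * L + a" for L B
  proof -
    have "(\<Sum>i=1..k. L) \<le> (\<Sum>i=1..k. x i)" using that(1) by (rule sum_mono)
    then have "k * L \<le> a * x m" using eq by simp
    moreover have "a * (x m + 1) \<le> a * B" using that(2) by (intro mult_le_mono2) simp
    ultimately show False using that(3) by simp
  qed
  show False
  proof (cases "x m < t")
    case True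
    have "1 \<le> x i" if "i \<in> {1..k}" for i using range[of i] that k_def by auto
    then show False using True ceil_div_bounds(2)[OF assms(1), of k] t_def
      by (intro no_sol[of 1 t]) auto
  next
    case False
    have "t \<le> x i" if "i \<in> {1..k}" for i
    proof -
      have "i \<in> {1..m}" using that k_def by auto
      then show ?thesis using False mono m_in by (meson not_le)
    qed
    moreover have "x m < N" using range[OF m_in] assms(3) unfolding N_def t_def k_def by simp
    ultimately show False using ceil_div_bounds(2)[OF assms(1), of "k * t"] N_def
      by (intro no_sol[of t N]) auto
  qed
qed

section \<open>Colourings without monochromatic sums\<close>

text \<open>By solution_from_sum, every colouring of [1,n] without monochromatic
  solution of L(k+1,a) is of this kind.\<close>
locale mono_sum_free =
  fixes k a n :: nat and c :: "nat \<Rightarrow> bool"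
  assumes no_mono_sum: "is_sum_of (\<lambda>v. v \<in> {1..n} \<and> c v = c y) k (a * y) \<Longrightarrow> y \<in> {1..n} \<Longrightarrow> False"
begin

abbreviation in_colour :: "bool \<Rightarrow> nat \<Rightarrow> bool" where
  "in_colour col \<equiv> \<lambda>v. v \<in> {1..n} \<and> c v = col"

lemma no_sum_of_colour: "is_sum_of (in_colour col) k (a * y) \<Longrightarrow> y \<in> {1..n} \<Longrightarrow> c y = col \<Longrightarrow> False"
  using no_mono_sum by blast

lemma sum_of_constant: "c v = col \<Longrightarrow> v \<in> {1..n} \<Longrightarrow> is_sum_of (in_colour col) N (N * v)"
  by (rule is_sum_of_replicate) simp

lemma sum_of_block:
  assumes "\<forall>v\<in>{L..M}. c v = col" "1 \<le> L" "L \<le> M" "M \<le> n" "N * L \<le> s" "s \<le> N * M"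
  shows "is_sum_of (in_colour col) N s"
  using assms by (intro is_sum_of_interval[of L M]) auto

text \<open>If [1,b-1] has the colour of 1 (b \<ge> 3), then no y with k \<le> a y and y \<le> (k+1-a)(b-1)
  has this colour: for the least i with (a-i) y \<le> (k-i)(b-1), the number a y is the sum of
  i copies of y and k-i numbers from [1,b-1].\<close>
lemma initial_block_forbids:
  assumes b: "3 \<le> b" "b \<le> n" and block: "\<forall>v\<in>{1..b-1}. c v = c 1"
    and a: "1 \<le> a" "a \<le> k" and y: "k \<le> a * y" "y \<le> (k + 1 - a) * (b - 1)" "y \<le> n"
  shows "c y \<noteq> c 1"
proof
  assume cy: "c y = c 1"
  define P where "P i \<longleftrightarrow> (a - i) * y \<le> (k - i) * (b - 1)" for i
  have "P (a - 1)" unfolding P_def using y(2) a by (simp add: Suc_diff_le)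
  define i where "i = (LEAST i. P i)"
  have Pi: "P i" and i_le: "i \<le> a - 1"
    unfolding i_def using \<open>P (a - 1)\<close> by (rule LeastI, rule Least_le)
  have low: "k - i \<le> (a - i) * y"
  proof (cases "i = 0")
    case True then show ?thesis using y(1) by simp
  next
    case False
    then have "\<not> P (i - 1)" unfolding i_def by (intro not_less_Least) auto
    then have "(k - (i - 1)) * (b - 1) < (a - (i - 1)) * y" unfolding P_def by simp
    moreover have "(k - (i - 1)) * 2 \<le> (k - (i - 1)) * (b - 1)" using b by (intro mult_le_mono) auto
    moreover have "(a - (i - 1)) * y \<le> 2 * ((a - i) * y)"
    proof -
      have "a - (i - 1) \<le> 2 * (a - i)" using False i_le by linarith
      then show ?thesis using mult_le_mono1[of "a - (i - 1)" "2 * (a - i)" y] by (simp add: mult.assoc)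
    qed
    ultimately show ?thesis using False i_le a by linarith
  qed
  have "1 \<le> y" using y(1) a by (cases y) auto
  then have "is_sum_of (in_colour (c 1)) i (i * y)" using cy y(3) by (intro sum_of_constant) auto
  moreover have "is_sum_of (in_colour (c 1)) (k - i) ((a - i) * y)"
    using b low Pi[unfolded P_def] by (intro sum_of_block[OF block]) simp_all
  ultimately have "is_sum_of (in_colour (c 1)) (i + (k - i)) (i * y + (a - i) * y)"
    by (rule is_sum_of_add)
  moreover have "i + (k - i) = k" "i * y + (a - i) * y = a * y"
    using i_le a by (auto simp: add_mult_distrib[symmetric])
  ultimately have "is_sum_of (in_colour (c 1)) k (a * y)" by metis
  then show False by (rule no_sum_of_colour) (use cy \<open>1 \<le> y\<close> y(3) in auto)
qed

text \<open>With p = k - a and c 2 \<noteq> c 1: p+2 and 2p+2 cannot have the colour of 2 (sums of copies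
  of 2 and of themselves), but then a (2p+2) = (a-1)(2p+2) + (p+2) + p \<cdot> 1 is monochromatic.\<close>
lemma colours_of_1_and_2_agree:
  assumes a: "2 \<le> a" "a \<le> k" and n: "2 * (k - a) + 2 \<le> n"
  shows "c 2 = c 1"
proof (rule ccontr)
  assume c21: "c 2 \<noteq> c 1"
  define p where "p = k - a"
  obtain a' where a': "a = a' + 2" using a(1) le_Suc_ex by (metis add.commute)
  have k: "k = p + a" using a p_def by simp
  have "c (p + 2) = c 1"
  proof (rule ccontr)
    assume "c (p + 2) \<noteq> c 1"
    then have col: "c (p + 2) = c 2" using c21 by auto
    have "is_sum_of (in_colour (c 2)) ((a - 2) + (p + 2)) ((a - 2) * (p + 2) + (p + 2) * 2)"
      using col n p_def by (intro is_sum_of_add sum_of_constant) auto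
    moreover have "(a - 2) + (p + 2) = k" "(a - 2) * (p + 2) + (p + 2) * 2 = a * (p + 2)"
      using k unfolding a' by (auto simp: algebra_simps)
    ultimately have "is_sum_of (in_colour (c 2)) k (a * (p + 2))" by metis
    then show False by (rule no_sum_of_colour) (use col n p_def in auto)
  qed
  moreover have "c (2 * p + 2) = c 1"
  proof (rule ccontr)
    assume "c (2 * p + 2) \<noteq> c 1"
    then have col: "c (2 * p + 2) = c 2" using c21 by auto
    have "is_sum_of (in_colour (c 2)) ((a - 1) + (p + 1)) ((a - 1) * (2 * p + 2) + (p + 1) * 2)"
      using col n p_def by (intro is_sum_of_add sum_of_constant) auto
    moreover have "(a - 1) + (p + 1) = k" "(a - 1) * (2 * p + 2) + (p + 1) * 2 = a * (2 * p + 2)"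
      using k unfolding a' by (auto simp: algebra_simps)
    ultimately have "is_sum_of (in_colour (c 2)) k (a * (2 * p + 2))" by metis
    then show False by (rule no_sum_of_colour) (use col n p_def in auto)
  qed
  ultimately have "is_sum_of (in_colour (c 1)) ((a - 1) + 1 + p) ((a - 1) * (2 * p + 2) + 1 * (p + 2) + p * 1)"
    using n p_def by (intro is_sum_of_add sum_of_constant) auto
  moreover have "(a - 1) + 1 + p = k" "(a - 1) * (2 * p + 2) + 1 * (p + 2) + p * 1 = a * (2 * p + 2)"
    using k unfolding a' by (auto simp: algebra_simps)
  ultimately have "is_sum_of (in_colour (c 1)) k (a * (2 * p + 2))" by metis
  then show False by (rule no_sum_of_colour) (use \<open>c (2 * p + 2) = c 1\<close> n p_def in auto)
qed

end

section \<open>The upper bound\<close>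

locale critical_colouring = mono_sum_free +
  fixes t :: nat
  assumes a_ge_3: "3 \<le> a" and k_large: "2 * a * a + 1 \<le> k + a"
    and t_def: "t = ceil_div k a" and n_def: "n = ceil_div (k * t) a"
begin

lemma a_pos: "0 < a"
  using a_ge_3 by simp

lemma t_bounds: "k \<le> a * t" "a * t < k + a"
  using ceil_div_bounds[OF a_pos] t_def by auto

lemma n_bounds: "k * t \<le> a * n" "a * n < k * t + a"
  using ceil_div_bounds[OF a_pos] n_def by auto

lemma k_ge_a_sq: "a * a \<le> k"
proof -
  have "a \<le> a * a" using a_ge_3 by simp
  then show ?thesis using k_large by linarith
qed

lemma k_ge_3a: "3 * a \<le> k"
  using k_ge_a_sq mult_le_mono1[OF a_ge_3, of a] by linarith

lemma t_ge_2a: "2 * a \<le> t"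
proof (rule ccontr)
  assume "\<not> 2 * a \<le> t"
  then have "a * t \<le> a * (2 * a - 1)" by (intro mult_le_mono2) simp
  also have "\<dots> = 2 * a * a - a" by (simp add: diff_mult_distrib2)
  moreover have "a \<le> 2 * a * a" by simp
  ultimately show False using t_bounds(1) k_large by linarith
qed

lemma t_le_k: "t \<le> k"
proof (rule ccontr)
  assume "\<not> t \<le> k"
  then have "a * (k + 1) \<le> a * t" by (intro mult_le_mono2) simp
  moreover have "k \<le> a * k" using a_pos by simp
  ultimately show False using t_bounds(2) by (simp add: algebra_simps)
qed

lemma n_ge_2k: "2 * k \<le> n"
proof -
  have "a * (2 * k) \<le> k * t" using mult_le_mono2[OF t_ge_2a, of k] by (simp add: ac_simps)
  then have "a * (2 * k) \<le> a * n" using n_bounds(1) by linarith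
  then show ?thesis using a_pos by simp
qed

lemma t_ge_3: "3 \<le> t"
  using t_ge_2a a_ge_3 by linarith

lemma t_succ_le_n: "t + 1 \<le> n"
  using t_le_k n_ge_2k k_ge_3a a_ge_3 by linarith

lemma t_room: "t + a + 1 \<le> k"
proof -
  have "3 * t \<le> a * t" using a_ge_3 by (rule mult_le_mono1)
  then show ?thesis using k_ge_3a t_bounds(2) a_ge_3 by linarith
qed

lemma k_room: "2 * k \<le> a * (k + 1 - a)"
proof -
  obtain j where j: "a = j + 3" using a_ge_3 by (metis add.commute le_Suc_ex)
  obtain l where l: "k = a * a + l" using k_ge_a_sq le_Suc_ex by blast
  show ?thesis unfolding l j by (simp add: algebra_simps)
qed

lemma n_times_a_minus_1: "(a - 1) * n \<le> (k - 1) * (t - 1)"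
proof -
  obtain s where s: "t = 2 * a + s" using t_ge_2a le_Suc_ex by blast
  obtain j where j: "k = 3 * a + j" using k_ge_3a le_Suc_ex by blast
  obtain b where b: "a = b + 3" using a_ge_3 le_Suc_ex by (metis add.commute)
  have "a * ((a - 1) * n) = (a - 1) * (a * n)" by (simp add: algebra_simps)
  also have "\<dots> \<le> (a - 1) * (k * t + a - 1)" using n_bounds(2) by (intro mult_le_mono2) simp
  also have "\<dots> \<le> a * ((k - 1) * (t - 1))" unfolding s j b by (simp add: algebra_simps)
  finally show ?thesis using a_pos by simp
qed

text \<open>Case 1, first step: if [1,t-1] has the colour of 1, then so has N.  Indeed t and t+1
  have the other colour by initial_block_forbids, and a N lies between k t and k (t+1).\<close>
lemma block_below_t_forces_top:
  assumes block: "\<forall>v\<in>{1..t-1}. c v = c 1"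
  shows "c n = c 1"
proof (rule ccontr)
  assume "c n \<noteq> c 1"
  have k1: "1 \<le> a" "a \<le> k" using a_ge_3 k_ge_3a by simp_all
  have room: "y \<le> (k + 1 - a) * (t - 1)" if "y \<le> t + 1" for y
  proof -
    have "y \<le> (t - 1) * 3" using that t_ge_3 by simp
    also have "\<dots> \<le> (t - 1) * (k + 1 - a)" using k_ge_3a a_ge_3 by (intro mult_le_mono2) simp
    finally show ?thesis by (simp add: mult.commute)
  qed
  have ct: "c t \<noteq> c 1" using t_succ_le_n
    by (intro initial_block_forbids[OF t_ge_3 _ block k1 t_bounds(1) room]) simp_all
  have ct1: "c (t + 1) \<noteq> c 1" using t_succ_le_n t_bounds(1)
    by (intro initial_block_forbids[OF t_ge_3 _ block k1 _ room]) simp_all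
  have pair: "\<forall>v\<in>{t..t+1}. c v = c t"
  proof
    fix v assume "v \<in> {t..t+1}"
    then have "v = t \<or> v = t + 1" by auto
    then show "c v = c t" using ct ct1 by auto
  qed
  have "a * n \<le> k * t + k" using n_bounds(2) k1 by linarith
  then have "a * n \<le> k * (t + 1)" by (simp add: algebra_simps)
  then have "is_sum_of (in_colour (c t)) k (a * n)"
    using t_ge_3 t_succ_le_n n_bounds(1) by (intro sum_of_block[OF pair]) (simp_all add: mult.commute)
  then show False by (rule no_sum_of_colour) (use \<open>c n \<noteq> c 1\<close> ct t_succ_le_n in auto)
qed

text \<open>Case 1: [1,t-1] has the colour of 1.  Then a N is the sum of N and of k-1 numbers
  from [1,t-1], all of the colour of 1; this uses (a-1) N \<le> (k-1)(t-1).\<close>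
lemma below_t_not_monochromatic:
  assumes block: "\<forall>v\<in>{1..t-1}. c v = c 1"
  shows False
proof -
  have cn: "c n = c 1" using block by (rule block_below_t_forces_top)
  have n1: "n \<in> {1..n}" using t_succ_le_n by simp
  have "is_sum_of (in_colour (c 1)) 1 (1 * n)" using cn n1 by (rule sum_of_constant)
  moreover have "is_sum_of (in_colour (c 1)) (k - 1) ((a - 1) * n)"
  proof (rule sum_of_block[OF block])
    have "k - 1 \<le> n" using n_ge_2k by simp
    moreover have "1 * n \<le> (a - 1) * n" using a_ge_3 by (intro mult_le_mono1) linarith
    ultimately show "(k - 1) * 1 \<le> (a - 1) * n" by linarith
  qed (use t_ge_3 t_succ_le_n n_times_a_minus_1 in simp_all)
  ultimately have "is_sum_of (in_colour (c 1)) (1 + (k - 1)) (1 * n + (a - 1) * n)"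
    by (rule is_sum_of_add)
  moreover have "1 + (k - 1) = k" "1 * n + (a - 1) * n = a * n"
    using a_ge_3 k_ge_3a add_mult_distrib[of 1 "a - 1" n, symmetric] by simp_all
  ultimately have "is_sum_of (in_colour (c 1)) k (a * n)" by metis
  then show False by (rule no_sum_of_colour) (use cn n1 in auto)
qed

lemma break_target:
  assumes b: "3 \<le> b" "b \<le> t - 1"
  obtains x z where "a * x = (k - 1) * b + z" "t \<le> z" "z < t + a"
    "k \<le> a * x" "x \<le> n" "x \<le> (k + 1 - a) * (b - 1)"
proof -
  define x where "x = ceil_div ((k - 1) * b + t) a"
  define z where "z = a * x - (k - 1) * b"
  have x_low: "(k - 1) * b + t \<le> a * x" and x_high: "a * x < (k - 1) * b + t + a"
    using ceil_div_bounds[OF a_pos] x_def by auto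
  have z: "a * x = (k - 1) * b + z" "t \<le> z" "z < t + a" using x_low x_high z_def by auto
  have "(k - 1) * 3 \<le> (k - 1) * b" using b(1) by (rule mult_le_mono2)
  then have "k \<le> a * x" using x_low k_ge_3a a_ge_3 by linarith
  moreover have "x \<le> n"
  proof -
    have "(k - 1) * b \<le> (k - 1) * (t - 1)" using b by (intro mult_le_mono2) simp
    moreover have "(k - 1) * (t - 1) + k + t = k * t + 1"
      using k_ge_3a t_ge_2a a_ge_3 by (cases k; cases t) (simp_all add: algebra_simps)
    ultimately have "a * x \<le> a * n" using x_high n_bounds(1) k_ge_3a by linarith
    then show ?thesis using a_pos by simp
  qed
  moreover have "x \<le> (k + 1 - a) * (b - 1)"
  proof -
    have "2 * k * (b - 1) \<le> a * ((k + 1 - a) * (b - 1))"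
      using mult_le_mono1[OF k_room, of "b - 1"] by (simp add: mult.assoc)
    moreover have "(k - 1) * b + t + a \<le> 2 * k * (b - 1)"
    proof -
      obtain d where d: "b = d + 3" using b by (metis add.commute le_Suc_ex)
      show ?thesis using t_room unfolding d by (simp add: algebra_simps)
    qed
    ultimately have "a * x \<le> a * ((k + 1 - a) * (b - 1))" using x_high by linarith
    then show ?thesis using a_pos by simp
  qed
  ultimately show ?thesis using z that by blast
qed

text \<open>Case 2: b \<in> [3,t-1] is the least number whose colour differs from that of 1.  With
  x, z from break_target, both z and x have the colour of b, and a x is the sum of k-1
  copies of b and z.\<close>
lemma first_break_below_t:
  assumes b: "3 \<le> b" "b \<le> t - 1" and cb: "c b \<noteq> c 1" and block: "\<forall>v\<in>{1..b-1}. c v = c 1"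
  shows False
proof -
  obtain x z where x: "a * x = (k - 1) * b + z" "t \<le> z" "z < t + a"
    "k \<le> a * x" "x \<le> n" "x \<le> (k + 1 - a) * (b - 1)"
    using break_target[OF b] .
  have k1: "1 \<le> a" "a \<le> k" using a_ge_3 k_ge_3a by simp_all
  have bn: "b \<le> n" using b t_le_k n_ge_2k by linarith
  have zn: "z \<le> n" using x(3) t_le_k k_ge_3a n_ge_2k by linarith
  have cz: "c z \<noteq> c 1"
  proof (rule initial_block_forbids[OF b(1) bn block k1 _ _ zn])
    have "a * t \<le> a * z" using x(2) by (rule mult_le_mono2)
    then show "k \<le> a * z" using t_bounds(1) by linarith
    have "t + a \<le> (k + 1 - a) * 2" using t_le_k k_ge_3a by linarith
    also have "\<dots> \<le> (k + 1 - a) * (b - 1)" using b by (intro mult_le_mono2) simp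
    finally show "z \<le> (k + 1 - a) * (b - 1)" using x(3) by linarith
  qed
  have cx: "c x \<noteq> c 1" using initial_block_forbids[OF b(1) bn block k1 x(4) x(6) x(5)] .
  have "is_sum_of (in_colour (c b)) ((k - 1) + 1) ((k - 1) * b + 1 * z)"
    using cb cz b bn zn x(2) t_ge_2a by (intro is_sum_of_add sum_of_constant) auto
  moreover have "(k - 1) + 1 = k" "(k - 1) * b + 1 * z = a * x" using k1 x(1) by simp_all
  ultimately have "is_sum_of (in_colour (c b)) k (a * x)" by metis
  moreover have "1 \<le> x" using x(4) k1 by (cases x) auto
  ultimately show False using no_sum_of_colour cx cb x(5) by auto
qed

theorem no_critical_colouring: False
proof (cases "c 2 = c 1")
  case False
  have "2 \<le> a" "a \<le> k" "2 * (k - a) + 2 \<le> n" using n_ge_2k k_ge_3a a_ge_3 by linarith+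
  then have "c 2 = c 1" by (rule colours_of_1_and_2_agree)
  with False show False by contradiction
next
  case c21: True
  show False
  proof (cases "\<forall>v\<in>{1..t-1}. c v = c 1")
    case True
    then show False by (rule below_t_not_monochromatic)
  next
    case False
    define B where "B v \<longleftrightarrow> v \<in> {1..t-1} \<and> c v \<noteq> c 1" for v
    define b where "b = (LEAST v. B v)"
    obtain v where "B v" using False unfolding B_def by blast
    then have Bb: "B b" unfolding b_def by (rule LeastI)
    have block: "\<forall>v\<in>{1..b-1}. c v = c 1"
    proof
      fix v assume "v \<in> {1..b-1}"
      moreover from this have "\<not> B v" unfolding b_def by (intro not_less_Least) auto
      ultimately show "c v = c 1" using Bb unfolding B_def by auto
    qed
    have b: "b \<in> {1..t-1}" "c b \<noteq> c 1" using Bb unfolding B_def by auto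
    then have "b \<noteq> 1" "b \<noteq> 2" using c21 by auto
    then have "3 \<le> b" using b(1) by auto
    then show False using b(1) by (intro first_break_below_t[OF _ _ b(2) block]) simp_all
  qed
qed

end

lemma rado_upper_bound:
  assumes "3 \<le> a" "2 * a * a + 1 \<le> (m - 1) + a"
  shows "rado_property m a (ceil_div ((m - 1) * ceil_div (m - 1) a) a)"
  unfolding rado_property_def
proof
  fix c :: "nat \<Rightarrow> bool"
  let ?t = "ceil_div (m - 1) a"
  let ?n = "ceil_div ((m - 1) * ?t) a"
  have "a \<le> 2 * a * a" by simp
  then have "1 \<le> m - 1" using assms(2) by linarith
  then have "2 \<le> m" by simp
  show "\<exists>x. is_solution_in m a ?n x \<and> (\<forall>i\<in>{1..m}. \<forall>j\<in>{1..m}. c (x i) = c (x j))"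
  proof (rule ccontr)
    assume none: "\<not> ?thesis"
    interpret critical_colouring "m - 1" a ?n c ?t
    proof unfold_locales
      fix y assume "is_sum_of (\<lambda>v. v \<in> {1..?n} \<and> c v = c y) (m - 1) (a * y)" "y \<in> {1..?n}"
      then show False using none solution_from_sum[OF \<open>2 \<le> m\<close>] by blast
    qed (use assms in simp_all)
    show False by (rule no_critical_colouring)
  qed
qed

theorem theorem1:
  fixes a m :: nat
  assumes "a \<ge> 3" and "m \<ge> 2 * a^2 - a + 2"
  shows "int (rado_number m a) = C m a"
proof -
  let ?N = "ceil_div ((m - 1) * ceil_div (m - 1) a) a"
  have a_pos: "0 < a" using assms(1) by simp
  have "a \<le> 2 * a * a" by simp
  then have k_large: "2 * a * a + 1 \<le> (m - 1) + a"
    using assms(2) unfolding power2_eq_square by linarith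
  then have "1 \<le> m - 1" using \<open>a \<le> 2 * a * a\<close> by linarith
  then have "2 \<le> m" by simp
  have "0 < ceil_div (m - 1) a" using ceil_div_pos[OF a_pos] \<open>1 \<le> m - 1\<close> by simp
  then have "1 \<le> ?N" using ceil_div_pos[OF a_pos] \<open>1 \<le> m - 1\<close> by (simp add: Suc_le_eq)
  have "rado_number m a = ?N"
    unfolding rado_number_def
  proof (rule Least_equality)
    show "1 \<le> ?N \<and> rado_property m a ?N"
      using \<open>1 \<le> ?N\<close> rado_upper_bound[OF assms(1) k_large] by (rule conjI)
    show "?N \<le> n" if "1 \<le> n \<and> rado_property m a n" for n
      using that rado_lower_bound[OF a_pos \<open>2 \<le> m\<close>] not_le by blast
  qed
  then show ?thesis using C_eq_ceil_div[OF a_pos, of m] by (simp only:)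
qed

end
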